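(* Let $G=(V,E,c)$ and $t:V\to\mathbb{R}_{\ge 0}$, and let $F$ and $(y_S)_{S\subseteq V}$ be the output forest and final growth values of shadow moat growing on $(G,t)$. Then for every vertex $v\in V$, $$c(F)\le 2\sum_{S\subseteq V,\ v\notin S} y_S .$$
   Context: $G=(V,E,c)$ is an undirected graph with edge costs $c:E\to\mathbb{R}_{\ge0}$; for $S\subseteq V$, $\delta(S)$ is the set of edges with exactly one endpoint in $S$, and $c(F)=\sum_{e\in F}c_e$. Shadow moat growing on $(G,t)$, for a "fingerprint" $t:V\to\mathbb{R}_{\ge0}$, is the following continuous process in time $\tau\ge 0$. It maintains a forest $F$ (initially empty), the partition of $V$ into connected components of $(V,F)$, and values $y_S\ge 0$ for all $S\subseteq V$ (initially $0$). At time $\tau$ a component $C$ is active iff it contains a vertex $w$ with $t_w>\tau$. Every active component $C$ increases $y_C$ at rate $1$; other $y_S$ stay fixed. Whenever an edge $e$ whose endpoints lie in different components satisfies $\sum_{S:\,e\in\delta(S)}y_S=c_e$, $e$ is added to $F$ and the two components merge (simultaneous events are processed one at a time by a fixed rule; edges whose endpoints are already in a common component are skipped). The process stops when no component is active. Finally, in a pruning phase, let $\mathcal D$ be the family of all vertex sets that were an inactive component at some moment; while some $S\in\mathcal D$ has $|\delta(S)\cap F|=1$, the unique edge of $\delta(S)\cap F$ is removed from $F$. The remaining $F$ is the output; $y_S$ denotes the final growth values. *)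

theory Defs
  imports Complex_Main
begin

definition delta :: "'a set set \<Rightarrow> 'a set \<Rightarrow> 'a set set" where
  "delta E S = {e \<in> E. card (e \<inter> S) = 1}"

definition cost :: "('a set \<Rightarrow> real) \<Rightarrow> 'a set set \<Rightarrow> real" where
  "cost c F = (\<Sum>e\<in>F. c e)"

definition is_graph :: "'a set \<Rightarrow> 'a set set \<Rightarrow> bool" where
  "is_graph V E \<longleftrightarrow> finite V \<and> (\<forall>e\<in>E. \<exists>u w. u \<in> V \<and> w \<in> V \<and> u \<noteq> w \<and> e = {u, w})"

definition comp :: "'a set \<Rightarrow> 'a set set \<Rightarrow> 'a \<Rightarrow> 'a set" where
  "comp V F v = {w \<in> V. (v, w) \<in> {(a, b). {a, b} \<in> F}\<^sup>*}"

definition components :: "'a set \<Rightarrow> 'a set set \<Rightarrow> 'a set set" where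
  "components V F = comp V F ` V"

definition active :: "('a \<Rightarrow> real) \<Rightarrow> real \<Rightarrow> 'a set \<Rightarrow> bool" where
  "active t \<tau> C \<longleftrightarrow> (\<exists>w\<in>C. t w > \<tau>)"

definition load :: "'a set \<Rightarrow> 'a set set \<Rightarrow> ('a set \<Rightarrow> real) \<Rightarrow> 'a set \<Rightarrow> real" where
  "load V E y e = (\<Sum>S | S \<subseteq> V \<and> e \<in> delta E S. y S)"

definition cross :: "'a set \<Rightarrow> 'a set set \<Rightarrow> 'a set set \<Rightarrow> 'a set \<Rightarrow> bool" where
  "cross V E F e \<longleftrightarrow> e \<in> E \<and> (\<forall>C\<in>components V F. \<not> e \<subseteq> C)"

definition tight :: "'a set \<Rightarrow> 'a set set \<Rightarrow> ('a set \<Rightarrow> real) \<Rightarrow> ('a set \<Rightarrow> real)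
    \<Rightarrow> 'a set set \<Rightarrow> 'a set \<Rightarrow> bool" where
  "tight V E c y F e \<longleftrightarrow> cross V E F e \<and> load V E y e = c e"

text \<open>States of the growth phase: (current time, current forest, current y).\<close>
type_synonym 'a smg_state = "real \<times> 'a set set \<times> ('a set \<Rightarrow> real)"

text \<open>One step of the growth phase: either continuous growth for a positive
  duration d (no pending tight edge, no activity change strictly inside the
  interval, no edge overshooting its cost), or adding a tight edge (any choice
  of tight edge, i.e. an arbitrary tie-breaking rule).\<close>
inductive smg_step :: "'a set \<Rightarrow> 'a set set \<Rightarrow> ('a set \<Rightarrow> real) \<Rightarrow> ('a \<Rightarrow> real)
    \<Rightarrow> 'a smg_state \<Rightarrow> 'a smg_state \<Rightarrow> bool"
  for V E c t where
  grow: "\<lbrakk> d > 0;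
           \<exists>C\<in>components V F. active t \<tau> C;
           \<forall>e. \<not> tight V E c y F e;
           \<forall>w\<in>V. \<not> (\<tau> < t w \<and> t w < \<tau> + d);
           y' = (\<lambda>S. if S \<in> components V F \<and> active t \<tau> S then y S + d else y S);
           \<forall>e. cross V E F e \<longrightarrow> load V E y' e \<le> c e \<rbrakk>
         \<Longrightarrow> smg_step V E c t (\<tau>, F, y) (\<tau> + d, F, y')"
| merge: "tight V E c y F e \<Longrightarrow> smg_step V E c t (\<tau>, F, y) (\<tau>, insert e F, y)"

definition smg_final :: "'a set \<Rightarrow> 'a set set \<Rightarrow> ('a set \<Rightarrow> real) \<Rightarrow> ('a \<Rightarrow> real)
    \<Rightarrow> 'a smg_state \<Rightarrow> bool" where
  "smg_final V E c t st = (case st of (\<tau>, F, y) \<Rightarrow>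
     (\<forall>C\<in>components V F. \<not> active t \<tau> C) \<and> (\<forall>e. \<not> tight V E c y F e))"

definition smg_run :: "'a set \<Rightarrow> 'a set set \<Rightarrow> ('a set \<Rightarrow> real) \<Rightarrow> ('a \<Rightarrow> real)
    \<Rightarrow> 'a smg_state list \<Rightarrow> bool" where
  "smg_run V E c t xs \<longleftrightarrow> xs \<noteq> [] \<and> hd xs = (0, {}, (\<lambda>S. 0))
     \<and> (\<forall>i. Suc i < length xs \<longrightarrow> smg_step V E c t (xs ! i) (xs ! Suc i))
     \<and> smg_final V E c t (last xs)"

definition inactive_family :: "'a set \<Rightarrow> ('a \<Rightarrow> real) \<Rightarrow> 'a smg_state list \<Rightarrow> 'a set set" where
  "inactive_family V t xs =
     {C. \<exists>\<tau> F y. (\<tau>, F, y) \<in> set xs \<and> C \<in> components V F \<and> \<not> active t \<tau> C}"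

definition prune_step :: "'a set set \<Rightarrow> 'a set set \<Rightarrow> 'a set set \<Rightarrow> 'a set set \<Rightarrow> bool" where
  "prune_step E D F F' \<longleftrightarrow> (\<exists>S\<in>D. \<exists>e. card (delta E S \<inter> F) = 1 \<and> e \<in> delta E S \<inter> F \<and> F' = F - {e})"

text \<open>F_out and y are an output forest and the final growth values of shadow
  moat growing on (G,t) (for some tie-breaking and some pruning order).\<close>
definition smg_output :: "'a set \<Rightarrow> 'a set set \<Rightarrow> ('a set \<Rightarrow> real) \<Rightarrow> ('a \<Rightarrow> real)
    \<Rightarrow> 'a set set \<Rightarrow> ('a set \<Rightarrow> real) \<Rightarrow> bool" where
  "smg_output V E c t Fout yout \<longleftrightarrow> (\<exists>xs \<tau> F.
     smg_run V E c t xs \<and> last xs = (\<tau>, F, yout)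
     \<and> (prune_step E (inactive_family V t xs))\<^sup>*\<^sup>* F Fout
     \<and> (\<forall>S\<in>inactive_family V t xs. card (delta E S \<inter> Fout) \<noteq> 1))"

end

theory Submission
  imports Defs
begin

text \<open>Every edge kept in F is tight at the end of the growth phase, so
  c(F) = \<Sum>_S y_S |\<delta>(S) \<inter> F|. We compare both sides of the claimed
  inequality as the moats grow. While the components of the current forest F_i
  grow for time d, the left side increases by d times the total F-degree of the
  active components and the right side by 2d times the number of active
  components avoiding v. Contracting the components of F_i turns the edges of
  F - F_i into a forest on the components they touch, so these components have
  total degree at most twice their number minus two. Pruning leaves no inactive
  component of degree one, so each inactive component that is touched has degree
  at least two; the remaining slack of two pays for the component containing v.\<close>

section \<open>Connected components\<close>

definition edge_rel :: "'a set set \<Rightarrow> ('a \<times> 'a) set" where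
  "edge_rel X = {(a, b). {a, b} \<in> X}"

definition graph_edge :: "'a set \<Rightarrow> 'a set \<Rightarrow> bool" where
  "graph_edge V e \<longleftrightarrow> (\<exists>u w. u \<in> V \<and> w \<in> V \<and> u \<noteq> w \<and> e = {u, w})"

lemma graph_edge_doubleton: "graph_edge V {x, y} \<longleftrightarrow> x \<in> V \<and> y \<in> V \<and> x \<noteq> y"
  by (auto simp: graph_edge_def doubleton_eq_iff)

lemma finite_graph_edges: "finite V \<Longrightarrow> \<forall>e\<in>X. graph_edge V e \<Longrightarrow> finite X"
  by (rule finite_subset[of X "Pow V"]) (auto simp: graph_edge_def)

lemma comp_edge_rel: "comp V X z = {w \<in> V. (z, w) \<in> (edge_rel X)\<^sup>*}"
  by (simp add: comp_def edge_rel_def)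

lemma edge_rel_rtrancl_sym: "(a, b) \<in> (edge_rel X)\<^sup>* \<Longrightarrow> (b, a) \<in> (edge_rel X)\<^sup>*"
proof -
  have "sym (edge_rel X)"
    by (auto simp: sym_def edge_rel_def insert_commute)
  then show "(a, b) \<in> (edge_rel X)\<^sup>* \<Longrightarrow> (b, a) \<in> (edge_rel X)\<^sup>*"
    by (meson sym_rtrancl symD)
qed

lemma mem_comp_self: "z \<in> V \<Longrightarrow> z \<in> comp V X z"
  by (simp add: comp_edge_rel)

lemma comp_eq_if_mem:
  assumes "a \<in> comp V X z"
  shows "comp V X a = comp V X z"
proof -
  have za: "(z, a) \<in> (edge_rel X)\<^sup>*" and az: "(a, z) \<in> (edge_rel X)\<^sup>*"
    using assms edge_rel_rtrancl_sym by (auto simp: comp_edge_rel)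
  show ?thesis
    unfolding comp_edge_rel using rtrancl_trans[OF za] rtrancl_trans[OF az] by blast
qed

lemma comp_in_components: "z \<in> V \<Longrightarrow> comp V X z \<in> components V X"
  by (simp add: components_def)

lemma components_eq_comp: "C \<in> components V X \<Longrightarrow> x \<in> C \<Longrightarrow> C = comp V X x"
  by (auto simp: components_def dest: comp_eq_if_mem)

lemma components_disjoint:
  "C \<in> components V X \<Longrightarrow> D \<in> components V X \<Longrightarrow> x \<in> C \<Longrightarrow> x \<in> D \<Longrightarrow> C = D"
  using components_eq_comp by metis

lemma components_subset: "C \<in> components V X \<Longrightarrow> C \<subseteq> V"
  by (auto simp: components_def comp_def)

lemma finite_components: "finite V \<Longrightarrow> finite (components V X)"
  by (simp add: components_def)

lemma comp_eq_if_edge: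
  assumes "{u, w} \<in> X" "u \<in> V" "w \<in> V"
  shows "comp V X u = comp V X w"
proof -
  have "w \<in> comp V X u"
    using assms by (auto simp: comp_edge_rel edge_rel_def)
  then show ?thesis
    by (simp add: comp_eq_if_mem)
qed

lemma edge_notin_delta_component:
  assumes "e \<in> X" "graph_edge V e" "C \<in> components V X"
  shows "e \<notin> delta E C"
proof -
  obtain u w where uw: "u \<in> V" "w \<in> V" "u \<noteq> w" "e = {u, w}"
    using assms(2) by (auto simp: graph_edge_def)
  have "comp V X u = comp V X w"
    using assms(1) uw comp_eq_if_edge by metis
  then have "u \<in> C \<longleftrightarrow> w \<in> C"
    using assms(3) uw mem_comp_self components_eq_comp by metis
  then have "e \<inter> C = {} \<or> e \<inter> C = {u, w}"
    using uw by blast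
  then show ?thesis
    using uw by (auto simp: delta_def)
qed

lemma rtrancl_insert_sym_pair:
  "(a, b) \<in> (R \<union> {(u, w), (w, u)})\<^sup>* \<longleftrightarrow>
   (a, b) \<in> R\<^sup>* \<or> ((a, u) \<in> R\<^sup>* \<and> (w, b) \<in> R\<^sup>*) \<or> ((a, w) \<in> R\<^sup>* \<and> (u, b) \<in> R\<^sup>*)"
    (is "?lhs \<longleftrightarrow> ?rhs")
proof
  assume ?lhs
  then show ?rhs
    by (induction b rule: rtrancl_induct) (auto intro: rtrancl_into_rtrancl)
next
  have "R\<^sup>* \<subseteq> (R \<union> {(u, w), (w, u)})\<^sup>*"
    by (rule rtrancl_mono) blast
  moreover have "(u, w) \<in> (R \<union> {(u, w), (w, u)})\<^sup>*" "(w, u) \<in> (R \<union> {(u, w), (w, u)})\<^sup>*"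
    by auto
  ultimately show "?rhs \<Longrightarrow> ?lhs"
    by (meson rtrancl_trans subsetD)
qed

lemma comp_insert_edge:
  assumes "z \<in> V"
  shows "comp V (insert {u, w} X) z =
    (if z \<in> comp V X u \<union> comp V X w then comp V X u \<union> comp V X w else comp V X z)"
proof -
  let ?R = "edge_rel X"
  have "edge_rel (insert {u, w} X) = ?R \<union> {(u, w), (w, u)}"
    by (auto simp: edge_rel_def doubleton_eq_iff)
  then have ins: "comp V (insert {u, w} X) z = {x \<in> V. (z, x) \<in> ?R\<^sup>* \<or>
      ((z, u) \<in> ?R\<^sup>* \<and> (w, x) \<in> ?R\<^sup>*) \<or> ((z, w) \<in> ?R\<^sup>* \<and> (u, x) \<in> ?R\<^sup>*)}"
    by (simp only: comp_edge_rel rtrancl_insert_sym_pair)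
  have cu: "comp V X u = {x \<in> V. (u, x) \<in> ?R\<^sup>*}" and cw: "comp V X w = {x \<in> V. (w, x) \<in> ?R\<^sup>*}"
    by (simp_all only: comp_edge_rel)
  show ?thesis
  proof (cases "z \<in> comp V X u \<union> comp V X w")
    case True
    have merged: "{x \<in> V. (z, x) \<in> ?R\<^sup>* \<or> ((z, a) \<in> ?R\<^sup>* \<and> (b, x) \<in> ?R\<^sup>*)
          \<or> ((z, b) \<in> ?R\<^sup>* \<and> (a, x) \<in> ?R\<^sup>*)} = {x \<in> V. (a, x) \<in> ?R\<^sup>*} \<union> {x \<in> V. (b, x) \<in> ?R\<^sup>*}"
      if az: "(a, z) \<in> ?R\<^sup>*" for a b
    proof -
      have za: "(z, a) \<in> ?R\<^sup>*"
        using az by (rule edge_rel_rtrancl_sym)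
      show ?thesis
        by (auto intro: rtrancl_trans[OF az] rtrancl_trans[OF za])
    qed
    from True have "(u, z) \<in> ?R\<^sup>* \<or> (w, z) \<in> ?R\<^sup>*"
      unfolding cu cw by auto
    then have "comp V (insert {u, w} X) z = comp V X u \<union> comp V X w"
    proof
      assume "(u, z) \<in> ?R\<^sup>*"
      then show ?thesis
        unfolding ins cu cw by (rule merged)
    next
      assume "(w, z) \<in> ?R\<^sup>*"
      from merged[OF this, of u] show ?thesis
        unfolding ins cu cw by blast
    qed
    with True show ?thesis
      by simp
  next
    case False
    then have "(u, z) \<notin> ?R\<^sup>*" "(w, z) \<notin> ?R\<^sup>*"
      using assms unfolding cu cw by auto
    then have "(z, u) \<notin> ?R\<^sup>*" "(z, w) \<notin> ?R\<^sup>*"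
      by (metis edge_rel_rtrancl_sym)+
    then have "comp V (insert {u, w} X) z = comp V X z"
      unfolding ins by (simp add: comp_edge_rel)
    with False show ?thesis
      by simp
  qed
qed

lemma components_insert_edge:
  assumes "u \<in> V" "w \<in> V"
  shows "components V (insert {u, w} X) =
    insert (comp V X u \<union> comp V X w) (components V X - {comp V X u, comp V X w})"
    (is "?L = insert (?Cu \<union> ?Cw) (?K - {?Cu, ?Cw})")
proof
  show "?L \<subseteq> insert (?Cu \<union> ?Cw) (?K - {?Cu, ?Cw})"
  proof
    fix C assume "C \<in> ?L"
    then obtain x where x: "x \<in> V" "C = comp V (insert {u, w} X) x"
      by (auto simp: components_def)
    show "C \<in> insert (?Cu \<union> ?Cw) (?K - {?Cu, ?Cw})"
    proof (cases "x \<in> ?Cu \<union> ?Cw")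
      case True
      then show ?thesis
        using x comp_insert_edge[OF x(1)] by simp
    next
      case False
      then have "comp V X x \<noteq> ?Cu" "comp V X x \<noteq> ?Cw"
        using mem_comp_self[OF x(1)] by auto
      then show ?thesis
        using x False comp_insert_edge[OF x(1)] comp_in_components[OF x(1)] by simp
    qed
  qed
next
  show "insert (?Cu \<union> ?Cw) (?K - {?Cu, ?Cw}) \<subseteq> ?L"
  proof
    fix C assume C: "C \<in> insert (?Cu \<union> ?Cw) (?K - {?Cu, ?Cw})"
    show "C \<in> ?L"
    proof (cases "C = ?Cu \<union> ?Cw")
      case True
      then have "comp V (insert {u, w} X) u = C"
        using comp_insert_edge[OF assms(1)] mem_comp_self[OF assms(1)] by simp
      then show ?thesis
        using assms(1) comp_in_components by metis
    next
      case False
      then obtain x where x: "x \<in> V" "C = comp V X x" "C \<noteq> ?Cu" "C \<noteq> ?Cw"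
        using C by (auto simp: components_def)
      have "x \<notin> ?Cu" "x \<notin> ?Cw"
        using x comp_eq_if_mem[of x V X] by auto
      then have "comp V (insert {u, w} X) x = C"
        using x(2) comp_insert_edge[OF x(1)] by simp
      then show ?thesis
        using x(1) comp_in_components by metis
    qed
  qed
qed

lemma card_components_insert_edge:
  assumes "finite V" "u \<in> V" "w \<in> V"
  shows "card (components V (insert {u, w} X)) =
    (if comp V X u = comp V X w then card (components V X) else card (components V X) - 1)"
proof -
  let ?Cu = "comp V X u" and ?Cw = "comp V X w" and ?K = "components V X"
  have fin: "finite ?K"
    using assms(1) by (rule finite_components)
  have in_K: "?Cu \<in> ?K" "?Cw \<in> ?K"
    using assms(2,3) by (simp_all add: comp_in_components)
  show ?thesis
  proof (cases "?Cu = ?Cw")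
    case True
    then show ?thesis
      using components_insert_edge[OF assms(2,3)] in_K by (simp add: insert_absorb)
  next
    case False
    have "?Cu \<union> ?Cw \<notin> ?K"
    proof
      assume "?Cu \<union> ?Cw \<in> ?K"
      then have "?Cu \<union> ?Cw = ?Cu" "?Cu \<union> ?Cw = ?Cw"
        using in_K components_disjoint mem_comp_self[OF assms(2)] mem_comp_self[OF assms(3)]
        by (metis UnI1, metis UnI2)
      with False show False
        by blast
    qed
    moreover have "card {?Cu, ?Cw} = 2"
      using False by simp
    moreover have "card ?K \<ge> 2"
      using in_K fin \<open>card {?Cu, ?Cw} = 2\<close> by (metis card_mono empty_subsetI insert_subset)
    ultimately show ?thesis
      using False components_insert_edge[OF assms(2,3)] fin in_K by (simp add: card_Diff_subset)
  qed
qed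

lemma card_components_empty: "card (components V {}) = card V"
proof -
  have "comp V {} z = {z}" if "z \<in> V" for z
    using that by (auto simp: comp_edge_rel edge_rel_def)
  then have "components V {} = (\<lambda>z. {z}) ` V"
    by (simp add: components_def)
  then show ?thesis
    by (simp add: card_image)
qed

lemma card_components_insert_le:
  assumes "finite V" "graph_edge V e"
  shows "card (components V X) \<le> card (components V (insert e X)) + 1"
  using assms card_components_insert_edge[OF assms(1)] by (auto simp: graph_edge_def)

lemma card_components_union_le:
  assumes "finite V" "finite Y" "\<forall>e\<in>Y. graph_edge V e"
  shows "card (components V X) \<le> card (components V (X \<union> Y)) + card Y"
  using assms(2,3)
proof (induction Y rule: finite_induct)
  case (insert e Y)
  then show ?case
    using card_components_insert_le[OF assms(1), of e "X \<union> Y"] by simp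
qed simp

lemma card_components_insert_cross:
  assumes "finite V" "graph_edge V e" "cross V E X e"
  shows "e \<notin> X" "card (components V (insert e X)) + 1 = card (components V X)"
proof -
  obtain u w where uw: "u \<in> V" "w \<in> V" "e = {u, w}"
    using assms(2) by (auto simp: graph_edge_def)
  have "comp V X u \<noteq> comp V X w"
  proof
    assume "comp V X u = comp V X w"
    then have "e \<subseteq> comp V X u"
      using uw mem_comp_self[of u V X] mem_comp_self[of w V X] by auto
    then show False
      using assms(3) comp_in_components[OF uw(1)] by (auto simp: cross_def)
  qed
  then show "e \<notin> X"
    using uw comp_eq_if_edge[of u w X V] by auto
  have "card (components V X) \<noteq> 0"
    using finite_components[OF assms(1)] comp_in_components[OF uw(1)] by auto
  then show "card (components V (insert e X)) + 1 = card (components V X)"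
    using card_components_insert_edge[OF assms(1) uw(1,2), of X] uw(3) \<open>comp V X u \<noteq> comp V X w\<close>
    by simp
qed

text \<open>For a finite set of edges of V this counting identity is equivalent to acyclicity.\<close>

definition is_forest :: "'a set \<Rightarrow> 'a set set \<Rightarrow> bool" where
  "is_forest V F \<longleftrightarrow> card F + card (components V F) = card V"

lemma is_forest_subset:
  assumes "finite V" "finite F" "\<forall>e\<in>F. graph_edge V e" "is_forest V F" "X \<subseteq> F"
  shows "is_forest V X"
proof -
  have "card (components V X) \<le> card (components V (X \<union> (F - X))) + card (F - X)"
    using assms by (intro card_components_union_le) auto
  moreover have "X \<union> (F - X) = F" "card (F - X) = card F - card X" "card X \<le> card F"
    using assms(2,5) by (auto simp: card_Diff_subset finite_subset card_mono)
  moreover have "card (components V {}) \<le> card (components V ({} \<union> X)) + card X"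
    using assms by (intro card_components_union_le) (auto dest: finite_subset)
  ultimately show ?thesis
    using assms(4) card_components_empty[of V] by (simp add: is_forest_def)
qed

section \<open>Degrees of components in a forest\<close>

definition cut_degree :: "'a set set \<Rightarrow> 'a set set \<Rightarrow> 'a set \<Rightarrow> nat" where
  "cut_degree E F S = card (delta E S \<inter> F)"

lemma sum_cut_degree_components_le:
  assumes "finite V" "\<forall>e\<in>Fo. graph_edge V e"
  shows "(\<Sum>C\<in>components V F. cut_degree E Fo C) \<le> 2 * card (Fo - F)"
proof -
  let ?K = "components V F" and ?D = "Fo - F"
  have fin: "finite ?K" "finite ?D"
    using finite_components[OF assms(1)] finite_graph_edges[OF assms] by auto
  have degree: "cut_degree E Fo C = (\<Sum>e\<in>?D. of_bool (e \<in> delta E C))" if "C \<in> ?K" for C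
  proof -
    have "delta E C \<inter> Fo = ?D \<inter> {e. e \<in> delta E C}"
      using edge_notin_delta_component[of _ F V C E] assms(2) that by auto
    then show ?thesis
      using fin by (simp add: cut_degree_def)
  qed
  have crossing: "card (?K \<inter> {C. e \<in> delta E C}) \<le> 2" if e: "e \<in> ?D" for e
  proof -
    obtain u w where uw: "e = {u, w}"
      using assms(2) e by (auto simp: graph_edge_def)
    have "?K \<inter> {C. e \<in> delta E C} \<subseteq> {comp V F u, comp V F w}"
    proof
      fix C assume C: "C \<in> ?K \<inter> {C. e \<in> delta E C}"
      then have "e \<inter> C \<noteq> {}"
        by (auto simp: delta_def)
      then have "u \<in> C \<or> w \<in> C"
        using uw by auto
      moreover have "C \<in> ?K"
        using C by simp
      ultimately show "C \<in> {comp V F u, comp V F w}"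
        using components_eq_comp[of C V F] by blast
    qed
    then have "card (?K \<inter> {C. e \<in> delta E C}) \<le> card {comp V F u, comp V F w}"
      by (simp add: card_mono)
    also have "\<dots> \<le> 2"
      by (simp add: card_insert_if)
    finally show ?thesis .
  qed
  have "(\<Sum>C\<in>?K. cut_degree E Fo C) = (\<Sum>e\<in>?D. \<Sum>C\<in>?K. of_bool (e \<in> delta E C))"
    using degree by (simp add: sum.swap[of _ ?K ?D])
  also have "\<dots> = (\<Sum>e\<in>?D. card (?K \<inter> {C. e \<in> delta E C}))"
    using fin by simp
  also have "\<dots> \<le> (\<Sum>e\<in>?D. 2)"
    using crossing by (rule sum_mono)
  finally show ?thesis
    by simp
qed

lemma comp_union_eq_if_no_crossing:
  assumes "\<forall>e\<in>F \<union> Fo. graph_edge V e" "Fo \<subseteq> E" "z \<in> V" "delta E (comp V F z) \<inter> Fo = {}"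
  shows "comp V (F \<union> Fo) z = comp V F z"
proof
  let ?C = "comp V F z"
  have "x \<in> ?C" if "(z, x) \<in> (edge_rel (F \<union> Fo))\<^sup>*" for x
    using that
  proof (induction x rule: rtrancl_induct)
    case base
    then show ?case
      using assms(3) by (rule mem_comp_self)
  next
    case (step x y)
    then have xy: "{x, y} \<in> F \<union> Fo"
      by (simp add: edge_rel_def)
    then have "graph_edge V {x, y}"
      using assms(1) by blast
    then have y: "y \<in> V" "x \<noteq> y"
      by (simp_all add: graph_edge_doubleton)
    show ?case
    proof (cases "{x, y} \<in> F")
      case True
      then have "(z, y) \<in> (edge_rel F)\<^sup>*"
        using step.IH by (auto simp: comp_edge_rel edge_rel_def intro: rtrancl_into_rtrancl)
      then show ?thesis
        using y by (simp add: comp_edge_rel)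
    next
      case False
      show ?thesis
      proof (rule ccontr)
        assume "y \<notin> ?C"
        then have "{x, y} \<inter> ?C = {x}"
          using step.IH by auto
        then have "{x, y} \<in> delta E ?C"
          using xy False assms(2) by (auto simp: delta_def)
        then show False
          using assms(4) xy False by auto
      qed
    qed
  qed
  then show "comp V (F \<union> Fo) z \<subseteq> ?C"
    by (auto simp: comp_edge_rel)
  have "(edge_rel F)\<^sup>* \<subseteq> (edge_rel (F \<union> Fo))\<^sup>*"
    by (rule rtrancl_mono) (auto simp: edge_rel_def)
  then show "?C \<subseteq> comp V (F \<union> Fo) z"
    by (auto simp: comp_edge_rel)
qed

lemma card_Diff_less_card_nonisolated:
  assumes "finite V" "\<forall>e\<in>F \<union> Fo. graph_edge V e" "Fo \<subseteq> E"
    "is_forest V F" "is_forest V (F \<union> Fo)"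
    "N = {C \<in> components V F. cut_degree E Fo C \<noteq> 0}" "N \<noteq> {}"
  shows "card (Fo - F) < card N"
proof -
  let ?K = "components V F" and ?X = "F \<union> Fo"
  let ?I = "?K - N"
  have fin: "finite ?K" "finite ?X" "finite Fo"
    using finite_components[OF assms(1)] finite_graph_edges[OF assms(1,2)] by (auto dest: finite_subset)
  have "card ?X = card F + card (Fo - F)"
    using fin card_Un_disjoint[of F "Fo - F"] by (simp add: Un_Diff_cancel)
  then have count: "card (Fo - F) + card (components V ?X) = card ?K"
    using assms(4,5) by (simp add: is_forest_def)
  have I_sub: "?I \<subseteq> components V ?X"
  proof
    fix C assume C: "C \<in> ?I"
    then obtain z where z: "z \<in> V" "C = comp V F z"
      by (auto simp: components_def)
    have "delta E C \<inter> Fo = {}"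
      using C assms(6) fin(3) by (auto simp: cut_degree_def)
    then have "comp V ?X z = C"
      using comp_union_eq_if_no_crossing[OF assms(2,3) z(1)] z(2) by simp
    then show "C \<in> components V ?X"
      using z(1) comp_in_components by metis
  qed
  obtain C where C: "C \<in> N"
    using assms(7) by auto
  then obtain z where z: "z \<in> V" "C = comp V F z"
    using assms(6) by (auto simp: components_def)
  have new: "comp V ?X z \<notin> ?I"
  proof
    assume merged: "comp V ?X z \<in> ?I"
    have "C \<in> ?K"
      using C assms(6) by simp
    then have "comp V ?X z = C"
      using components_disjoint[of "comp V ?X z" V F C z] merged
        mem_comp_self[OF z(1), of ?X] mem_comp_self[OF z(1), of F] z(2) by auto
    then show False
      using merged C by simp
  qed
  have "card (insert (comp V ?X z) ?I) \<le> card (components V ?X)"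
    using I_sub comp_in_components[OF z(1)] finite_components[OF assms(1)] by (simp add: card_mono)
  then have "card ?I + 1 \<le> card (components V ?X)"
    using new fin(1) by simp
  moreover have "N \<subseteq> ?K"
    using assms(6) by auto
  then have "card ?K = card ?I + card N"
    using fin(1) by (simp add: card_Diff_subset finite_subset card_mono)
  ultimately show ?thesis
    using count by simp
qed

lemma active_cut_degree_sum_le:
  assumes "finite V" "\<forall>e\<in>F \<union> Fo. graph_edge V e" "Fo \<subseteq> E"
    "is_forest V F" "is_forest V (F \<union> Fo)"
    "\<forall>C\<in>components V F. \<not> P C \<longrightarrow> cut_degree E Fo C \<noteq> 1"
  shows "(\<Sum>C | C \<in> components V F \<and> P C. cut_degree E Fo C)
          \<le> 2 * card {C \<in> components V F. P C \<and> v \<notin> C}"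
proof -
  let ?K = "components V F" and ?deg = "cut_degree E Fo"
  let ?A = "{C \<in> ?K. P C}" and ?Av = "{C \<in> ?K. P C \<and> v \<notin> C}"
  define N where "N = {C \<in> ?K. ?deg C \<noteq> 0}"
  let ?B = "(?K - ?A) \<inter> N"
  have fin: "finite ?K"
    using assms(1) by (rule finite_components)
  show ?thesis
  proof (cases "N = {}")
    case True
    then show ?thesis
      by (simp add: N_def)
  next
    case False
    have nonisolated: "card (Fo - F) < card N"
      using card_Diff_less_card_nonisolated[OF assms(1-5) N_def False] .
    have total: "(\<Sum>C\<in>?K. ?deg C) \<le> 2 * card (Fo - F)"
      using sum_cut_degree_components_le[OF assms(1)] assms(2) by blast
    have split: "(\<Sum>C\<in>?K. ?deg C) = (\<Sum>C\<in>?K - ?A. ?deg C) + (\<Sum>C\<in>?A. ?deg C)"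
      using fin by (intro sum.subset_diff) auto
    have "2 * card ?B = (\<Sum>C\<in>?B. 2)"
      by simp
    also have "\<dots> \<le> (\<Sum>C\<in>?B. ?deg C)"
    proof (rule sum_mono)
      fix C assume "C \<in> ?B"
      then show "2 \<le> ?deg C"
        using assms(6) unfolding N_def by fastforce
    qed
    also have "\<dots> \<le> (\<Sum>C\<in>?K - ?A. ?deg C)"
      using fin by (intro sum_mono2) auto
    finally have inactive: "2 * card ?B \<le> (\<Sum>C\<in>?K - ?A. ?deg C)" .
    have "N = (N \<inter> ?A) \<union> ?B" "(N \<inter> ?A) \<inter> ?B = {}"
      unfolding N_def by auto
    then have card_N: "card N = card (N \<inter> ?A) + card ?B"
      using fin card_Un_disjoint[of "N \<inter> ?A" ?B] by simp
    have "N \<inter> ?A \<subseteq> insert (comp V F v) ?Av"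
      using components_eq_comp[of _ V F v] unfolding N_def by auto
    then have "card (N \<inter> ?A) \<le> card (insert (comp V F v) ?Av)"
      using fin by (intro card_mono) auto
    also have "\<dots> \<le> card ?Av + 1"
      using fin by (simp add: card_insert_if)
    finally have "card (N \<inter> ?A) \<le> card ?Av + 1" .
    then show ?thesis
      using nonisolated total split inactive card_N by linarith
  qed
qed

section \<open>The growth phase\<close>

definition weighted_degree :: "'a set \<Rightarrow> 'a set set \<Rightarrow> 'a set set \<Rightarrow> ('a set \<Rightarrow> real) \<Rightarrow> real" where
  "weighted_degree V E F y = (\<Sum>S\<in>Pow V. y S * real (cut_degree E F S))"

lemma load_eq_sum_Pow:
  assumes "finite V"
  shows "load V E y e = (\<Sum>S\<in>Pow V. if e \<in> delta E S then y S else 0)"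
  using sum.inter_filter[of "Pow V" y "\<lambda>S. e \<in> delta E S"] assms unfolding load_def by simp

lemma cost_eq_weighted_degree:
  assumes "finite V" "finite F" "\<forall>e\<in>F. load V E y e = c e"
  shows "cost c F = weighted_degree V E F y"
proof -
  have "cost c F = (\<Sum>e\<in>F. \<Sum>S\<in>Pow V. if e \<in> delta E S then y S else 0)"
    unfolding cost_def using assms(3) load_eq_sum_Pow[OF assms(1)] by simp
  also have "\<dots> = (\<Sum>S\<in>Pow V. \<Sum>e\<in>F. if e \<in> delta E S then y S else 0)"
    by (rule sum.swap)
  also have "\<dots> = weighted_degree V E F y"
    unfolding weighted_degree_def cut_degree_def using assms(2)
    by (intro sum.cong) (auto simp: sum.If_cases Int_commute)
  finally show ?thesis .
qed

lemma weighted_degree_grow: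
  assumes "finite V" "\<forall>S\<in>A. S \<subseteq> V"
  shows "weighted_degree V E F (\<lambda>S. if S \<in> A then y S + d else y S) =
    weighted_degree V E F y + d * real (\<Sum>C\<in>A. cut_degree E F C)"
proof -
  let ?k = "\<lambda>S. real (cut_degree E F S)"
  have "(if S \<in> A then y S + d else y S) * ?k S = y S * ?k S + (if S \<in> A then d * ?k S else 0)" for S
    by (simp add: algebra_simps)
  moreover have "(\<Sum>S\<in>Pow V. if S \<in> A then d * ?k S else 0) = (\<Sum>S\<in>Pow V \<inter> A. d * ?k S)"
    using assms(1) by (simp add: sum.inter_restrict)
  moreover have "Pow V \<inter> A = A"
    using assms(2) by blast
  ultimately show ?thesis
    unfolding weighted_degree_def by (simp add: sum.distrib sum_distrib_left)
qed

lemma sum_avoiding_grow: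
  assumes "finite V" "\<forall>S\<in>A. S \<subseteq> V"
  shows "(\<Sum>S | S \<subseteq> V \<and> v \<notin> S. if S \<in> A then y S + d else y S) =
    (\<Sum>S | S \<subseteq> V \<and> v \<notin> S. y S) + d * real (card {C \<in> A. v \<notin> C})"
proof -
  let ?Q = "{S. S \<subseteq> V \<and> v \<notin> S}"
  have "(if S \<in> A then y S + d else y S) = y S + (if S \<in> A then d else 0)" for S
    by simp
  moreover have "(\<Sum>S\<in>?Q. if S \<in> A then d else 0) = (\<Sum>S\<in>?Q \<inter> A. d)"
    using assms(1) by (intro sum.inter_restrict[symmetric]) simp
  moreover have "?Q \<inter> A = {C \<in> A. v \<notin> C}"
    using assms(2) by blast
  ultimately show ?thesis
    by (simp add: sum.distrib)
qed

lemma grow_preserves_degree_bound: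
  assumes "finite V" "\<forall>e\<in>F \<union> Fo. graph_edge V e" "Fo \<subseteq> E"
    "is_forest V F" "is_forest V (F \<union> Fo)"
    "\<forall>C\<in>components V F. \<not> active t \<tau> C \<longrightarrow> cut_degree E Fo C \<noteq> 1" "d \<ge> 0"
    "y' = (\<lambda>S. if S \<in> components V F \<and> active t \<tau> S then y S + d else y S)"
    "weighted_degree V E Fo y \<le> 2 * (\<Sum>S | S \<subseteq> V \<and> v \<notin> S. y S)"
  shows "weighted_degree V E Fo y' \<le> 2 * (\<Sum>S | S \<subseteq> V \<and> v \<notin> S. y' S)"
proof -
  let ?A = "{C \<in> components V F. active t \<tau> C}"
  have A_sub: "\<forall>S\<in>?A. S \<subseteq> V"
    using components_subset by blast
  have y': "y' = (\<lambda>S. if S \<in> ?A then y S + d else y S)"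
    using assms(8) by simp
  have "(\<Sum>C\<in>?A. cut_degree E Fo C) \<le> 2 * card {C \<in> ?A. v \<notin> C}"
    using active_cut_degree_sum_le[OF assms(1-6)] by simp
  then have "real (\<Sum>C\<in>?A. cut_degree E Fo C) \<le> real (2 * card {C \<in> ?A. v \<notin> C})"
    by (rule of_nat_mono)
  then have "d * real (\<Sum>C\<in>?A. cut_degree E Fo C) \<le> d * (2 * real (card {C \<in> ?A. v \<notin> C}))"
    using assms(7) by (intro mult_left_mono) simp_all
  then show ?thesis
    using assms(9) unfolding y' weighted_degree_grow[OF assms(1) A_sub] sum_avoiding_grow[OF assms(1) A_sub]
    by (simp add: algebra_simps)
qed

definition growth_invariant :: "'a set \<Rightarrow> 'a set set \<Rightarrow> ('a set \<Rightarrow> real) \<Rightarrow> 'a smg_state \<Rightarrow> bool" where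
  "growth_invariant V E c st = (case st of (\<tau>, F, y) \<Rightarrow>
     F \<subseteq> E \<and> is_forest V F \<and> (\<forall>e\<in>F. load V E y e = c e))"

lemma is_graph_finite_edges:
  assumes "is_graph V E"
  shows "finite V" "\<forall>e\<in>E. graph_edge V e" "finite E"
proof -
  show "finite V" "\<forall>e\<in>E. graph_edge V e"
    using assms by (auto simp: is_graph_def graph_edge_def)
  then show "finite E"
    by (rule finite_graph_edges)
qed

lemma load_grow_forest_edge:
  assumes "e \<in> F" "graph_edge V e"
  shows "load V E (\<lambda>S. if S \<in> components V F \<and> P S then y S + d else y S) e = load V E y e"
  unfolding load_def using edge_notin_delta_component[OF assms] by (intro sum.cong) auto

lemma smg_step_growth_invariant:
  assumes "is_graph V E" "growth_invariant V E c st" "smg_step V E c t st st'"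
  shows "growth_invariant V E c st'"
  using assms(3)
proof cases
  case (grow d F \<tau> y y')
  then show ?thesis
    using assms(1,2) is_graph_finite_edges(2)[OF assms(1)] load_grow_forest_edge[of _ F V E "active t \<tau>" y d]
    by (auto simp: growth_invariant_def)
next
  case (merge y F e \<tau>)
  then have e: "cross V E F e" "load V E y e = c e" "e \<in> E"
    by (auto simp: tight_def cross_def)
  have "finite F"
    using assms(2) is_graph_finite_edges(3)[OF assms(1)] merge by (auto simp: growth_invariant_def finite_subset)
  moreover have "e \<notin> F" "card (components V (insert e F)) + 1 = card (components V F)"
    using card_components_insert_cross[OF is_graph_finite_edges(1)[OF assms(1)] _ e(1)]
      is_graph_finite_edges(2)[OF assms(1)] e(3) by auto
  ultimately show ?thesis
    using assms(2) merge e by (auto simp: growth_invariant_def is_forest_def)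
qed

lemma smg_run_induct:
  assumes "smg_run V E c t xs" "P (0, {}, \<lambda>S. 0)"
    "\<And>st st'. st \<in> set xs \<Longrightarrow> P st \<Longrightarrow> smg_step V E c t st st' \<Longrightarrow> P st'"
    "st \<in> set xs"
  shows "P st"
proof -
  have "P (xs ! i)" if "i < length xs" for i
    using that
  proof (induction i)
    case 0
    then show ?case
      using assms(1,2) by (simp add: smg_run_def hd_conv_nth)
  next
    case (Suc i)
    then show ?case
      using assms(1) assms(3)[of "xs ! i" "xs ! Suc i"] by (simp add: smg_run_def)
  qed
  then show ?thesis
    using assms(4) by (auto simp: in_set_conv_nth)
qed

lemma smg_run_growth_invariant:
  assumes "is_graph V E" "smg_run V E c t xs" "st \<in> set xs"
  shows "growth_invariant V E c st"
  using assms(2) _ _ assms(3)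
proof (rule smg_run_induct)
  show "growth_invariant V E c (0, {}, \<lambda>S. 0)"
    by (simp add: growth_invariant_def is_forest_def card_components_empty)
qed (rule smg_step_growth_invariant[OF assms(1)])

lemma smg_run_forest_subset_last:
  assumes "smg_run V E c t xs" "st \<in> set xs"
  shows "fst (snd st) \<subseteq> fst (snd (last xs))"
proof -
  have "fst (snd (xs ! i)) \<subseteq> fst (snd (xs ! j))" if "i \<le> j" "j < length xs" for i j
    using that
  proof (induction j rule: dec_induct)
    case (step j)
    then have "smg_step V E c t (xs ! j) (xs ! Suc j)"
      using assms(1) by (simp add: smg_run_def)
    then have "fst (snd (xs ! j)) \<subseteq> fst (snd (xs ! Suc j))"
      by cases auto
    then show ?case
      using step by simp
  qed simp
  moreover obtain i where "i < length xs" "st = xs ! i"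
    using assms(2) by (auto simp: in_set_conv_nth)
  ultimately show ?thesis
    using assms(1) by (simp add: smg_run_def last_conv_nth)
qed

lemma prune_steps_subset:
  assumes "(prune_step E D)\<^sup>*\<^sup>* F F'"
  shows "F' \<subseteq> F"
  using assms by induction (auto simp: prune_step_def)

lemma smg_run_degree_bound:
  assumes "is_graph V E" "smg_run V E c t xs" "Fo \<subseteq> fst (snd (last xs))"
    "\<forall>S\<in>inactive_family V t xs. cut_degree E Fo S \<noteq> 1" "st \<in> set xs"
  shows "weighted_degree V E Fo (snd (snd st)) \<le> 2 * (\<Sum>S | S \<subseteq> V \<and> v \<notin> S. snd (snd st) S)"
proof -
  note graph = is_graph_finite_edges[OF assms(1)]
  obtain \<tau>' Fl yl where last: "last xs = (\<tau>', Fl, yl)"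
    by (cases "last xs")
  have "last xs \<in> set xs"
    using assms(2) by (simp add: smg_run_def)
  then have "growth_invariant V E c (last xs)"
    by (rule smg_run_growth_invariant[OF assms(1,2)])
  then have Fl: "Fl \<subseteq> E" "is_forest V Fl"
    using last by (simp_all add: growth_invariant_def)
  show ?thesis
    using assms(2) _ _ assms(5)
  proof (rule smg_run_induct[where P = "\<lambda>st. weighted_degree V E Fo (snd (snd st))
      \<le> 2 * (\<Sum>S | S \<subseteq> V \<and> v \<notin> S. snd (snd st) S)"])
    show "weighted_degree V E Fo (snd (snd (0, {}, \<lambda>S. 0)))
        \<le> 2 * (\<Sum>S | S \<subseteq> V \<and> v \<notin> S. snd (snd (0, {}, \<lambda>S. 0 :: real)) S)"
      by (simp add: weighted_degree_def)
  next
    fix st st' assume st: "st \<in> set xs"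
      and bound: "weighted_degree V E Fo (snd (snd st)) \<le> 2 * (\<Sum>S | S \<subseteq> V \<and> v \<notin> S. snd (snd st) S)"
      and step: "smg_step V E c t st st'"
    from step show "weighted_degree V E Fo (snd (snd st')) \<le> 2 * (\<Sum>S | S \<subseteq> V \<and> v \<notin> S. snd (snd st') S)"
    proof cases
      case (grow d F \<tau> y y')
      have "growth_invariant V E c st"
        using smg_run_growth_invariant[OF assms(1,2) st] .
      then have F: "F \<subseteq> E" "is_forest V F"
        using grow by (simp_all add: growth_invariant_def)
      have "F \<subseteq> Fl"
        using smg_run_forest_subset_last[OF assms(2) st] grow last by simp
      then have "F \<union> Fo \<subseteq> Fl"
        using assms(3) last by simp
      then have edges: "\<forall>e\<in>F \<union> Fo. graph_edge V e" and "is_forest V (F \<union> Fo)"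
        using Fl graph is_forest_subset[of V Fl] finite_graph_edges[of V Fl] by blast+
      moreover have "\<forall>C\<in>components V F. \<not> active t \<tau> C \<longrightarrow> cut_degree E Fo C \<noteq> 1"
        using assms(4) st grow unfolding inactive_family_def by blast
      ultimately show ?thesis
        using grow_preserves_degree_bound[OF graph(1) edges _ F(2)] bound grow assms(3) Fl last by auto
    next
      case merge
      then show ?thesis
        using bound by simp
    qed
  qed
qed

theorem mainTheorem3:
  fixes V :: "'a set" and E :: "'a set set" and c :: "'a set \<Rightarrow> real" and t :: "'a \<Rightarrow> real"
    and F :: "'a set set" and y :: "'a set \<Rightarrow> real" and v :: 'a
  assumes "is_graph V E"
    and "\<forall>e\<in>E. c e \<ge> 0"
    and "\<forall>w\<in>V. t w \<ge> 0"
    and "smg_output V E c t F y"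
    and "v \<in> V"
  shows "cost c F \<le> 2 * (\<Sum>S | S \<subseteq> V \<and> v \<notin> S. y S)"
proof -
  obtain xs \<tau> Fl where run: "smg_run V E c t xs" and last: "last xs = (\<tau>, Fl, y)"
    and pruning: "(prune_step E (inactive_family V t xs))\<^sup>*\<^sup>* Fl F"
    and pruned: "\<forall>S\<in>inactive_family V t xs. cut_degree E F S \<noteq> 1"
    using assms(4) unfolding smg_output_def cut_degree_def by blast
  have last_in: "last xs \<in> set xs"
    using run by (simp add: smg_run_def)
  have F_sub: "F \<subseteq> Fl"
    using pruning by (rule prune_steps_subset)
  have "growth_invariant V E c (last xs)"
    using smg_run_growth_invariant[OF assms(1) run last_in] .
  then have "finite F" "\<forall>e\<in>F. load V E y e = c e"
    using last F_sub is_graph_finite_edges(3)[OF assms(1)]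
    by (auto simp: growth_invariant_def finite_subset)
  then have "cost c F = weighted_degree V E F y"
    by (rule cost_eq_weighted_degree[OF is_graph_finite_edges(1)[OF assms(1)]])
  also have "\<dots> \<le> 2 * (\<Sum>S | S \<subseteq> V \<and> v \<notin> S. y S)"
    using smg_run_degree_bound[OF assms(1) run _ pruned last_in] F_sub last by simp
  finally show ?thesis .
qed

end
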